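(* Let $r,n\ge 1$ and work in the group algebra $\mathbb{Z}[\mathsf{G}_{r,n}]$. Put $$\Phi_1:=1+\sum_{t=1}^{r-1}(1^{[t]}\,1),\qquad \Phi_j:=1+\sum_{i=1}^{j-1}(i\,j)+\sum_{t=1}^{r-1}\sum_{i=1}^{j}(i^{[t]}\,j)\quad(2\le j\le n),$$ where $(i\,j)=(i^{[0]}\,j)$. Then $$\Phi_1\Phi_2\cdots\Phi_n=\sum_{\pi\in\mathsf{G}_{r,n}}\pi .$$
   Context: $\mathsf{G}_{r,n}=C_r\wr\mathfrak{S}_n$ is the set of pairs $\pi=(\sigma,\mathbf z)$ with $\sigma\in\mathfrak S_n$ and $\mathbf z=(z_1,\dots,z_n)\in(\mathbb Z/r\mathbb Z)^n$, written as the word (window notation) $\pi=\sigma_1^{[z_1]}\sigma_2^{[z_2]}\cdots\sigma_n^{[z_n]}$; $\sigma_i$ is the base value and $z_i\in\{0,\dots,r-1\}$ the color of the $i$-th letter, colors being read modulo $r$. The product is $(\sigma,\mathbf z)(\rho,\mathbf w)=(\sigma\rho,\mathbf w+\rho(\mathbf z))$ with $\rho(\mathbf z)=(z_{\rho(1)},\dots,z_{\rho(n)})$; the identity is $12\cdots n$ with all colors $0$. For $1\le i<j\le n$ and $t\in\mathbb Z/r\mathbb Z$, $(i^{[t]}\,j)$ denotes the element such that, for every $\pi=\sigma_1^{[z_1]}\cdots\sigma_n^{[z_n]}$, the product $\pi\cdot(i^{[t]}\,j)$ is obtained from $\pi$ by replacing the letter in position $j$ by $\sigma_i^{[z_i+t]}$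 and the letter in position $i$ by $\sigma_j^{[z_j-t]}$. For $1\le i\le n$ and $0<t<r$, $(i^{[t]}\,i)$ denotes the element such that $\pi\cdot(i^{[t]}\,i)$ is obtained from $\pi$ by replacing the letter in position $i$ by $\sigma_i^{[z_i+t]}$. *)

theory Defs
  imports "HOL-Combinatorics.Combinatorics"
begin

text \<open>Elements of the wreath product C_r wr S_n: pairs (sigma, z) with sigma a permutation
  of {1..n} (identity outside) and z a colour vector with z i in {0..r-1} for i in {1..n},
  z i = 0 outside {1..n}.\<close>

type_synonym cperm = "(nat \<Rightarrow> nat) \<times> (nat \<Rightarrow> nat)"

definition Grn :: "nat \<Rightarrow> nat \<Rightarrow> cperm set" where
  "Grn r n = {(\<sigma>, z). \<sigma> permutes {1..n} \<and> (\<forall>i. z i < r) \<and> (\<forall>i. i \<notin> {1..n} \<longrightarrow> z i = 0)}"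

definition gmult :: "nat \<Rightarrow> cperm \<Rightarrow> cperm \<Rightarrow> cperm" where
  "gmult r x y = (fst x \<circ> fst y, (\<lambda>k. (snd y k + snd x (fst y k)) mod r))"

definition gone :: cperm where
  "gone = (id, (\<lambda>_. 0))"

text \<open>The element (i^[t] j): for i < j the transposition of positions i, j with colour t at
  position j and colour -t at position i; for i = j the identity with colour t at i.\<close>
definition crefl :: "nat \<Rightarrow> nat \<Rightarrow> nat \<Rightarrow> nat \<Rightarrow> cperm" where
  "crefl r i t j =
     (if i = j then (id, (\<lambda>k. if k = i then t mod r else 0))
      else (transpose i j,
            (\<lambda>k. if k = j then t mod r else if k = i then (r - t mod r) mod r else 0)))"

type_synonym galg = "cperm \<Rightarrow> int"

definition delta :: "cperm \<Rightarrow> galg" where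
  "delta g = (\<lambda>h. if h = g then 1 else 0)"

definition ga_mult :: "nat \<Rightarrow> nat \<Rightarrow> galg \<Rightarrow> galg \<Rightarrow> galg" where
  "ga_mult r n a b = (\<lambda>g. \<Sum>x\<in>Grn r n. \<Sum>y\<in>Grn r n. if gmult r x y = g then a x * b y else 0)"

definition Phi :: "nat \<Rightarrow> nat \<Rightarrow> galg" where
  "Phi r j =
    (if j = 1 then (\<lambda>g. delta gone g + (\<Sum>t\<in>{1..r-1}. delta (crefl r 1 t 1) g))
     else (\<lambda>g. delta gone g + (\<Sum>i\<in>{1..j-1}. delta (crefl r i 0 j) g)
              + (\<Sum>t\<in>{1..r-1}. \<Sum>i\<in>{1..j}. delta (crefl r i t j) g)))"

fun prodPhi :: "nat \<Rightarrow> nat \<Rightarrow> nat \<Rightarrow> galg" where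
  "prodPhi r n 0 = delta gone"
| "prodPhi r n (Suc k) = ga_mult r n (prodPhi r n k) (Phi r (Suc k))"

end

theory Submission
  imports Defs
begin

text \<open>Every element g of G(r,k+1) factors uniquely as x (i^[t] k+1) with x in G(r,k),
  1 \<le> i \<le> k+1 and 0 \<le> t < r: i is the position that g sends to k+1, t is read off the
  colour of g at i, and then x is forced. Since Phi(k+1) is exactly the sum of these r(k+1)
  generators, induction on k shows that Phi(1) ... Phi(k) is the indicator function of G(r,k),
  each element arising exactly once.\<close>

lemma Grn_iff:
  "(s, z) \<in> Grn r n \<longleftrightarrow> s permutes {1..n} \<and> (\<forall>i. z i < r) \<and> (\<forall>i. i \<notin> {1..n} \<longrightarrow> z i = 0)"
  by (simp add: Grn_def)

lemma finite_Grn: "finite (Grn r n)"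
proof -
  let ?Z = "{f. \<forall>x. (x \<in> {1..n} \<longrightarrow> f x \<in> {..<r}) \<and> (x \<notin> {1..n} \<longrightarrow> f x = 0)}"
  have "Grn r n \<subseteq> {p. p permutes {1..n}} \<times> ?Z"
    by (auto simp: Grn_def)
  moreover have "finite ({p. p permutes {1..n}} \<times> ?Z)"
    by (intro finite_cartesian_product finite_permutations finite_set_of_finite_funs) auto
  ultimately show ?thesis by (rule finite_subset)
qed

lemma Grn_mono: "k \<le> n \<Longrightarrow> Grn r k \<subseteq> Grn r n"
  by (auto simp: Grn_def intro: permutes_subset)

lemma Grn_0: "r \<ge> 1 \<Longrightarrow> Grn r 0 = {gone}"
  by (auto simp: Grn_def gone_def)

lemma Grn_SucI:
  assumes "x \<in> Grn r (Suc k)" "fst x (Suc k) = Suc k" "snd x (Suc k) = 0"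
  shows "x \<in> Grn r k"
proof -
  obtain s z where x: "x = (s, z)" by fastforce
  have "s permutes {1..Suc k}" using assms(1) by (simp add: x Grn_iff)
  then have "s permutes {1..k}"
    by (rule permutes_superset) (use assms(2) in \<open>auto simp: x le_Suc_eq\<close>)
  then show ?thesis using assms by (auto simp: x Grn_iff le_Suc_eq)
qed

lemma Grn_fixes_Suc:
  assumes "y \<in> Grn r k"
  shows "fst y (Suc k) = Suc k" "snd y (Suc k) = 0"
  using assms permutes_not_in[of "fst y" "{1..k}" "Suc k"] by (cases y; simp add: Grn_iff)+

lemma gmult_assoc: "gmult r (gmult r x y) w = gmult r x (gmult r y w)"
  by (simp add: gmult_def comp_assoc mod_add_left_eq mod_add_right_eq add.assoc)

lemma gmult_gone_right: "x \<in> Grn r n \<Longrightarrow> gmult r x gone = x"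
  by (cases x) (simp add: gmult_def gone_def Grn_iff)

lemma gmult_closed:
  assumes "r \<ge> 1" "x \<in> Grn r n" "y \<in> Grn r n"
  shows "gmult r x y \<in> Grn r n"
proof -
  obtain s z s' z' where x: "x = (s, z)" and y: "y = (s', z')" by fastforce
  have "s' m = m" if "m \<notin> {1..n}" for m
    using assms(3) that unfolding y Grn_iff by (meson permutes_not_in)
  then show ?thesis
    using assms by (auto simp: x y gmult_def Grn_iff intro: permutes_compose)
qed

lemma crefl_in_Grn:
  assumes "r \<ge> 1" "i \<in> {1..j}" "j \<le> n"
  shows "crefl r i t j \<in> Grn r n"
proof -
  have "transpose i j permutes {1..n}" using assms by (intro permutes_swap_id) auto
  then show ?thesis using assms by (auto simp: crefl_def Grn_iff permutes_id)
qed

lemma fst_crefl_self: "fst (crefl r i t j) i = j"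
  by (simp add: crefl_def)

lemma snd_crefl_less: "r \<ge> 1 \<Longrightarrow> snd (crefl r i t j) m < r"
  by (simp add: crefl_def)

lemma crefl_self_0: "crefl r j 0 j = gone"
  by (auto simp: crefl_def gone_def)

lemma neg_mod_add_cancel: "t < r \<Longrightarrow> ((r - t) mod r + t) mod r = (0::nat)"
  by (cases "t = 0") auto

lemma crefl_right_inverse:
  assumes "t < r"
  shows "gmult r (crefl r i t j) (crefl r i (if i = j then (r - t) mod r else t) j) = gone"
proof (cases "i = j")
  case True
  then show ?thesis
    using neg_mod_add_cancel[OF assms] assms by (simp add: crefl_def gmult_def gone_def fun_eq_iff add.commute)
next
  case False
  have "(t + (r - t) mod r) mod r = 0" using neg_mod_add_cancel[OF assms] by (simp add: add.commute)
  then show ?thesis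
    using False neg_mod_add_cancel[OF assms] assms by (simp add: crefl_def gmult_def gone_def fun_eq_iff)
qed

lemma crefl_colour_inj:
  assumes "t < r" "t' < r" "snd (crefl r i t j) i = snd (crefl r i t' j) i"
  shows "t = t'"
  using assms by (cases "i = j"; cases "t = 0"; cases "t' = 0") (auto simp: crefl_def)

lemma crefl_factor_exists:
  assumes "r \<ge> 1" "g \<in> Grn r (Suc k)"
  shows "\<exists>x\<in>Grn r k. \<exists>i\<in>{1..Suc k}. \<exists>t<r. gmult r x (crefl r i t (Suc k)) = g"
proof -
  obtain s z where g: "g = (s, z)" by fastforce
  have s: "s permutes {1..Suc k}" and z: "\<And>i. z i < r"
    using assms(2) by (auto simp: g Grn_iff)
  obtain p where p: "p \<in> {1..Suc k}" "s p = Suc k"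
  proof -
    have "Suc k \<in> s ` {1..Suc k}" using permutes_image[OF s] by simp
    then show ?thesis using that by auto
  qed
  \<comment> \<open>\<open>c'\<close> clears position \<open>k+1\<close> of \<open>g\<close>, so \<open>g c'\<close> lies in G(r,k); its inverse is the factor sought.\<close>
  define t' where "t' = (r - z p) mod r"
  define c' where "c' = crefl r p t' (Suc k)"
  define t where "t = (if p = Suc k then (r - t') mod r else t')"
  define x where "x = gmult r g c'"
  have t': "t' < r" and t: "t < r" using assms(1) by (auto simp: t'_def t_def)
  have "x \<in> Grn r (Suc k)"
    unfolding x_def c'_def using assms p by (intro gmult_closed crefl_in_Grn) auto
  moreover have "fst x (Suc k) = Suc k"
    using p by (auto simp: x_def c'_def g gmult_def crefl_def)
  moreover have "snd x (Suc k) = 0"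
    using neg_mod_add_cancel[OF z] t' by (simp add: x_def c'_def g gmult_def crefl_def t'_def)
  ultimately have "x \<in> Grn r k" by (rule Grn_SucI)
  moreover have "gmult r x (crefl r p t (Suc k)) = g"
    using crefl_right_inverse[OF t'] assms(2)
    by (simp add: x_def c'_def t_def gmult_assoc gmult_gone_right)
  ultimately show ?thesis using p t by blast
qed

lemma crefl_factor_unique:
  assumes "r \<ge> 1" "x \<in> Grn r k" "x' \<in> Grn r k" "i \<in> {1..Suc k}" "i' \<in> {1..Suc k}"
    "t < r" "t' < r"
    and eq: "gmult r x (crefl r i t (Suc k)) = gmult r x' (crefl r i' t' (Suc k))"
  shows "x = x' \<and> i = i' \<and> t = t'"
proof -
  let ?c = "crefl r i t (Suc k)"
  let ?g = "gmult r x ?c"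
  have "?g \<in> Grn r (Suc k)"
    using assms Grn_mono[of k "Suc k"] by (intro gmult_closed crefl_in_Grn) auto
  then have perm: "fst ?g permutes {1..Suc k}" by (cases ?g) (simp add: Grn_iff)
  have "fst ?g i = Suc k"
    by (simp add: gmult_def fst_crefl_self Grn_fixes_Suc[OF assms(2)])
  moreover have "fst ?g i' = Suc k"
    unfolding eq by (simp add: gmult_def fst_crefl_self Grn_fixes_Suc[OF assms(3)])
  ultimately have i: "i = i'"
    using permutes_inj[OF perm] by (metis injD)
  have "snd ?g i = snd ?c i"
    using snd_crefl_less[OF assms(1)]
    by (simp add: gmult_def fst_crefl_self Grn_fixes_Suc[OF assms(2)])
  moreover have "snd ?g i = snd (crefl r i t' (Suc k)) i"
    unfolding eq using i snd_crefl_less[OF assms(1)]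
    by (simp add: gmult_def fst_crefl_self Grn_fixes_Suc[OF assms(3)])
  ultimately have t: "t = t'" using crefl_colour_inj assms(6,7) by metis
  let ?c' = "crefl r i (if i = Suc k then (r - t) mod r else t) (Suc k)"
  have "x = gmult r (gmult r x ?c) ?c'"
    using crefl_right_inverse[OF assms(6)] assms(2) by (simp add: gmult_assoc gmult_gone_right)
  also have "\<dots> = x'"
    using crefl_right_inverse[OF assms(6)] assms(3) eq i t by (simp add: gmult_assoc gmult_gone_right)
  finally show ?thesis using i t by simp
qed

lemma crefl_factorization_bij:
  assumes "r \<ge> 1"
  shows "bij_betw (\<lambda>(x, i, t). gmult r x (crefl r i t (Suc k)))
           (Grn r k \<times> {1..Suc k} \<times> {..<r}) (Grn r (Suc k))"
proof -
  let ?f = "\<lambda>(x, i, t). gmult r x (crefl r i t (Suc k))"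
  let ?S = "Grn r k \<times> {1..Suc k} \<times> {..<r}"
  have "Grn r k \<subseteq> Grn r (Suc k)" by (rule Grn_mono) simp
  then have "?f ` ?S \<subseteq> Grn r (Suc k)"
    using assms by (auto intro!: gmult_closed crefl_in_Grn)
  moreover have "Grn r (Suc k) \<subseteq> ?f ` ?S"
  proof
    fix g assume "g \<in> Grn r (Suc k)"
    then obtain x i t where "x \<in> Grn r k" "i \<in> {1..Suc k}" "t < r"
      and "g = gmult r x (crefl r i t (Suc k))"
      using crefl_factor_exists[OF assms] by metis
    then show "g \<in> ?f ` ?S" by (auto intro: rev_image_eqI[of "(x, i, t)"])
  qed
  moreover have "inj_on ?f ?S"
    using crefl_factor_unique[OF assms] by (auto simp: inj_on_def)
  ultimately show ?thesis by (auto simp: bij_betw_def)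
qed

lemma card_fibre_bij_betw:
  assumes "bij_betw f S T"
  shows "card {p \<in> S. f p = g} = of_bool (g \<in> T)"
proof (cases "g \<in> T")
  case True
  then obtain p where p: "p \<in> S" "f p = g" using assms by (auto simp: bij_betw_def)
  then have "{p \<in> S. f p = g} = {p}"
    using assms by (auto simp: bij_betw_def dest: inj_onD)
  then show ?thesis using True by simp
next
  case False
  then have fibre: "{p \<in> S. f p = g} = {}" using assms by (auto simp: bij_betw_def)
  show ?thesis unfolding fibre using False by simp
qed

lemma Phi_eq_sum_crefl:
  assumes "r \<ge> 1" "j \<ge> 1"
  shows "Phi r j = (\<lambda>g. \<Sum>(i, t)\<in>{1..j} \<times> {..<r}. delta (crefl r i t j) g)"
proof
  fix g
  have colours: "{..<r} = insert 0 {1..r-1}" and positions: "{1..j} = insert j {1..j-1}"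
    using assms by auto
  have "(\<Sum>(i, t)\<in>{1..j} \<times> {..<r}. delta (crefl r i t j) g)
      = (\<Sum>t<r. \<Sum>i\<in>{1..j}. delta (crefl r i t j) g)"
    by (simp add: sum.cartesian_product[symmetric]) (rule sum.swap)
  also have "\<dots> = (\<Sum>i\<in>{1..j}. delta (crefl r i 0 j) g)
                    + (\<Sum>t\<in>{1..r-1}. \<Sum>i\<in>{1..j}. delta (crefl r i t j) g)"
    by (subst colours) simp
  also have "(\<Sum>i\<in>{1..j}. delta (crefl r i 0 j) g)
      = delta gone g + (\<Sum>i\<in>{1..j-1}. delta (crefl r i 0 j) g)"
    using crefl_self_0 by (subst positions, subst sum.insert) auto
  finally show "Phi r j g = (\<Sum>(i, t)\<in>{1..j} \<times> {..<r}. delta (crefl r i t j) g)"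
    using assms by (auto simp: Phi_def)
qed

lemma ga_mult_indicator_sum_delta:
  assumes "A \<subseteq> Grn r n" "finite I" "c ` I \<subseteq> Grn r n"
  shows "ga_mult r n (\<lambda>g. of_bool (g \<in> A)) (\<lambda>g. \<Sum>q\<in>I. delta (c q) g) g
           = int (card {p \<in> A \<times> I. gmult r (fst p) (c (snd p)) = g})"
proof -
  let ?G = "Grn r n"
  have "ga_mult r n (\<lambda>g. of_bool (g \<in> A)) (\<lambda>g. \<Sum>q\<in>I. delta (c q) g) g
      = (\<Sum>x\<in>?G. \<Sum>q\<in>I. \<Sum>y\<in>?G. if y = c q then of_bool (x \<in> A \<and> gmult r x y = g) else 0)"
    unfolding ga_mult_def
    by (intro sum.cong refl, subst sum.swap) (auto simp: sum_distrib_left delta_def intro!: sum.cong)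
  also have "\<dots> = (\<Sum>x\<in>?G. \<Sum>q\<in>I. of_bool (x \<in> A \<and> gmult r x (c q) = g))"
    using assms(3) finite_Grn by (auto intro!: sum.cong)
  also have "\<dots> = (\<Sum>x\<in>A. \<Sum>q\<in>I. of_bool (x \<in> A \<and> gmult r x (c q) = g))"
    by (rule sum.mono_neutral_right[OF finite_Grn assms(1)]) auto
  also have "\<dots> = (\<Sum>x\<in>A. \<Sum>q\<in>I. of_bool (gmult r x (c q) = g))"
    by (intro sum.cong) auto
  also have "\<dots> = (\<Sum>p\<in>A \<times> I. of_bool (gmult r (fst p) (c (snd p)) = g))"
    by (simp add: sum.cartesian_product case_prod_beta)
  also have "\<dots> = int (card {p \<in> A \<times> I. gmult r (fst p) (c (snd p)) = g})"
    using assms(2) finite_subset[OF assms(1) finite_Grn] by (simp add: Int_def)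
  finally show ?thesis .
qed

lemma prodPhi_eq_indicator:
  assumes "r \<ge> 1" "k \<le> n"
  shows "prodPhi r n k = (\<lambda>g. of_bool (g \<in> Grn r k))"
  using assms(2)
proof (induction k)
  case 0
  show ?case using Grn_0[OF assms(1)] by (simp add: delta_def fun_eq_iff)
next
  case (Suc k)
  let ?c = "\<lambda>(i, t). crefl r i t (Suc k)"
  let ?I = "{1..Suc k} \<times> {..<r}"
  have Phi: "Phi r (Suc k) = (\<lambda>g. \<Sum>q\<in>?I. delta (?c q) g)"
    using Phi_eq_sum_crefl[OF assms(1), of "Suc k"] by (simp add: case_prod_beta)
  have "Grn r k \<subseteq> Grn r n" using Suc.prems by (intro Grn_mono) simp
  moreover have "?c ` ?I \<subseteq> Grn r n"
    using assms(1) Suc.prems by (auto intro!: crefl_in_Grn)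
  ultimately have "prodPhi r n (Suc k) g
      = int (card {p \<in> Grn r k \<times> ?I. gmult r (fst p) (?c (snd p)) = g})" for g
    using Suc by (simp add: Phi ga_mult_indicator_sum_delta)
  then show ?case
    using card_fibre_bij_betw[OF crefl_factorization_bij[OF assms(1)]]
    by (simp add: case_prod_beta fun_eq_iff)
qed

theorem lemma2p2:
  fixes r n :: nat
  assumes "r \<ge> 1" and "n \<ge> 1"
  shows "prodPhi r n n = (\<lambda>g. \<Sum>\<pi>\<in>Grn r n. delta \<pi> g)"
  using prodPhi_eq_indicator[OF assms(1) order_refl] by (simp add: delta_def finite_Grn of_bool_def)

end
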